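(* Let $\Gamma$ be a positive recursive absorbing game with payoffs in $(0,1]$, let $x\in X$ be a nonabsorbing mixed action profile and $i\in I$. Then $v_i\le\max\{0,\rho_i(x)\}$. In particular, if $\rho_i(x)=-\infty$ then $v_i=0$, and if $\rho_i(x)>-\infty$ then $\rho_i(x)\ge v_i$.
   Context: A positive recursive absorbing game is $\Gamma=(I,(A_i)_{i\in I},(r_i)_{i\in I},p)$ with $I$ finite, $A_i$ finite nonempty, $A=\prod_iA_i$, $r_i:A\to(0,1]$, $p:A\to[0,1]$; at each stage, if not yet absorbed, players choose $a^n\in A$, the game absorbs with probability $p(a^n)$ with terminal payoff $r(a^n)$, and otherwise continues with payoff $0$. Undiscounted payoff: $\gamma(\sigma)=\mathbf E_\sigma[r(a^\theta)\mathbf 1_{\theta<\infty}]$ for behavior strategy profiles $\sigma$, with $\theta$ the absorption stage. Minmax value: $v_i:=\inf_{\sigma_{-i}}\sup_{\sigma_i}\gamma_i(\sigma)$. Let $\Xi_i=\Delta(A_i)$, $\Xi=\prod_i\Xi_i$; for $x\in\Xi$, ${\rm supp}(x)=\prod_i{\rm supp}(x_i)$, $p(x)=\sum_{a\in A}p(a)\prod_jx_j(a_j)$, and when $p(x)>0$, $r_i(x)=\sum_a r_i(a)p(a)\prod_jx_j(a_j)/p(x)$. Let $B=\{a\in A:p(a)=0\}$, and let $X$ be the set of $x\in\Xi$ whose support is contained in a single connected component of the graph on $B$ where two profiles are adjacent iff they differ in exactly one player's action (equivalently, $X=\{x\in\Xi:p(x)=0\}$). Define $\rho_i(x):=\max\{r_i(a_i,x_{-i}):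 a_i\in A_i,\ p(a_i,x_{-i})>0\}$, with the convention $\max\emptyset=-\infty$. *)

theory Defs
  imports "HOL-Analysis.Analysis" "HOL-Library.Extended_Real"
begin

definition profiles :: "('i \<Rightarrow> 'a set) \<Rightarrow> ('i \<Rightarrow> 'a) set" where
  "profiles A = Pi\<^sub>E UNIV A"

definition mixed :: "'a set \<Rightarrow> ('a \<Rightarrow> real) \<Rightarrow> bool" where
  "mixed S y \<longleftrightarrow> (\<forall>b. 0 \<le> y b) \<and> (\<forall>b. b \<notin> S \<longrightarrow> y b = 0) \<and> sum y S = 1"

definition mixed_profile :: "('i \<Rightarrow> 'a set) \<Rightarrow> ('i \<Rightarrow> 'a \<Rightarrow> real) \<Rightarrow> bool" where
  "mixed_profile A x \<longleftrightarrow> (\<forall>j. mixed (A j) (x j))"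

definition prob_prof :: "('i::finite \<Rightarrow> 'a \<Rightarrow> real) \<Rightarrow> ('i \<Rightarrow> 'a) \<Rightarrow> real" where
  "prob_prof x a = (\<Prod>j\<in>UNIV. x j (a j))"

definition pmix :: "('i::finite \<Rightarrow> 'a set) \<Rightarrow> (('i \<Rightarrow> 'a) \<Rightarrow> real) \<Rightarrow> ('i \<Rightarrow> 'a \<Rightarrow> real) \<Rightarrow> real" where
  "pmix A p x = (\<Sum>a\<in>profiles A. p a * prob_prof x a)"

definition rmix :: "('i::finite \<Rightarrow> 'a set) \<Rightarrow> ('i \<Rightarrow> ('i \<Rightarrow> 'a) \<Rightarrow> real) \<Rightarrow> (('i \<Rightarrow> 'a) \<Rightarrow> real)
     \<Rightarrow> 'i \<Rightarrow> ('i \<Rightarrow> 'a \<Rightarrow> real) \<Rightarrow> real" where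
  "rmix A r p i x = (\<Sum>a\<in>profiles A. r i a * p a * prob_prof x a) / pmix A p x"

definition dirac :: "'a \<Rightarrow> 'a \<Rightarrow> real" where
  "dirac b = (\<lambda>c. if c = b then 1 else 0)"

definition nonabs :: "('i::finite \<Rightarrow> 'a set) \<Rightarrow> (('i \<Rightarrow> 'a) \<Rightarrow> real) \<Rightarrow> ('i \<Rightarrow> 'a \<Rightarrow> real) set" where
  "nonabs A p = {x. mixed_profile A x \<and> pmix A p x = 0}"

definition rho :: "('i::finite \<Rightarrow> 'a set) \<Rightarrow> ('i \<Rightarrow> ('i \<Rightarrow> 'a) \<Rightarrow> real) \<Rightarrow> (('i \<Rightarrow> 'a) \<Rightarrow> real)
     \<Rightarrow> 'i \<Rightarrow> ('i \<Rightarrow> 'a \<Rightarrow> real) \<Rightarrow> ereal" where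
  "rho A r p i x =
     (let S = {b \<in> A i. pmix A p (x(i := dirac b)) > 0}
      in if S = {} then -\<infinity> else ereal (Max ((\<lambda>b. rmix A r p i (x(i := dirac b))) ` S)))"

text \<open>Behavior strategies: a history is the list of (nonabsorbing) action profiles played so far;
  a strategy of player j maps each history to a mixed action in A j.\<close>
definition strat :: "('i \<Rightarrow> 'a set) \<Rightarrow> 'i \<Rightarrow> (('i \<Rightarrow> 'a) list \<Rightarrow> 'a \<Rightarrow> real) \<Rightarrow> bool" where
  "strat A j s \<longleftrightarrow> (\<forall>h. mixed (A j) (s h))"

definition strat_profile :: "('i \<Rightarrow> 'a set) \<Rightarrow> ('i \<Rightarrow> ('i \<Rightarrow> 'a) list \<Rightarrow> 'a \<Rightarrow> real) \<Rightarrow> bool" where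
  "strat_profile A \<sigma> \<longleftrightarrow> (\<forall>j. strat A j (\<sigma> j))"

definition reach :: "(('i::finite \<Rightarrow> 'a) \<Rightarrow> real) \<Rightarrow> ('i \<Rightarrow> ('i \<Rightarrow> 'a) list \<Rightarrow> 'a \<Rightarrow> real)
     \<Rightarrow> ('i \<Rightarrow> 'a) list \<Rightarrow> real" where
  "reach p \<sigma> h = (\<Prod>k<length h. prob_prof (\<lambda>j. \<sigma> j (take k h)) (h ! k) * (1 - p (h ! k)))"

definition absorb_pay :: "('i::finite \<Rightarrow> 'a set) \<Rightarrow> ('i \<Rightarrow> ('i \<Rightarrow> 'a) \<Rightarrow> real) \<Rightarrow> (('i \<Rightarrow> 'a) \<Rightarrow> real)
     \<Rightarrow> ('i \<Rightarrow> ('i \<Rightarrow> 'a) list \<Rightarrow> 'a \<Rightarrow> real) \<Rightarrow> 'i \<Rightarrow> ('i \<Rightarrow> 'a) list \<Rightarrow> real" where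
  "absorb_pay A r p \<sigma> i h = (\<Sum>a\<in>profiles A. prob_prof (\<lambda>j. \<sigma> j h) a * p a * r i a)"

text \<open>Undiscounted payoff \<gamma>_i(\<sigma>) = E[r_i(a^\<theta>) 1_{\<theta><\<infinity>}], as the (nonnegative) series over
  the absorption stage n.\<close>
definition gamma :: "('i::finite \<Rightarrow> 'a set) \<Rightarrow> ('i \<Rightarrow> ('i \<Rightarrow> 'a) \<Rightarrow> real) \<Rightarrow> (('i \<Rightarrow> 'a) \<Rightarrow> real)
     \<Rightarrow> 'i \<Rightarrow> ('i \<Rightarrow> ('i \<Rightarrow> 'a) list \<Rightarrow> 'a \<Rightarrow> real) \<Rightarrow> real" where
  "gamma A r p i \<sigma> =
     (\<Sum>n. \<Sum>h\<in>{h. set h \<subseteq> profiles A \<and> length h = n}. reach p \<sigma> h * absorb_pay A r p \<sigma> i h)"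

text \<open>Minmax value v_i = inf_{\<sigma>_{-i}} sup_{\<sigma>_i} \<gamma>_i(\<sigma>). (The i-th component of \<sigma> is ignored.)\<close>
definition minmax :: "('i::finite \<Rightarrow> 'a set) \<Rightarrow> ('i \<Rightarrow> ('i \<Rightarrow> 'a) \<Rightarrow> real) \<Rightarrow> (('i \<Rightarrow> 'a) \<Rightarrow> real)
     \<Rightarrow> 'i \<Rightarrow> real" where
  "minmax A r p i =
     (INF \<sigma>\<in>{\<sigma>. strat_profile A \<sigma>}. SUP \<tau>\<in>{\<tau>. strat A i \<tau>}. gamma A r p i (\<sigma>(i := \<tau>)))"

definition pos_rec_absorbing_game :: "('i::finite \<Rightarrow> 'a set) \<Rightarrow> ('i \<Rightarrow> ('i \<Rightarrow> 'a) \<Rightarrow> real)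
     \<Rightarrow> (('i \<Rightarrow> 'a) \<Rightarrow> real) \<Rightarrow> bool" where
  "pos_rec_absorbing_game A r p \<longleftrightarrow>
     (\<forall>j. finite (A j) \<and> A j \<noteq> {}) \<and>
     (\<forall>a\<in>profiles A. 0 \<le> p a \<and> p a \<le> 1 \<and> (\<forall>j. 0 < r j a \<and> r j a \<le> 1))"

end

theory Submission
  imports Defs
begin

text \<open>Let the opponents of \<open>i\<close> play \<open>x\<^sub>-\<^sub>i\<close> at every stage, whatever the history. Put
  \<open>M = max 0 \<rho>\<^sub>i(x)\<close>. For a pure action \<open>b\<close> of \<open>i\<close>, the absorbing payoff
  \<open>p(b,x\<^sub>-\<^sub>i) r\<^sub>i(b,x\<^sub>-\<^sub>i)\<close> is at most \<open>M p(b,x\<^sub>-\<^sub>i)\<close>: either \<open>p(b,x\<^sub>-\<^sub>i) = 0\<close>, or \<open>b\<close>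
  competes in the maximum defining \<open>\<rho>\<^sub>i(x)\<close>. Both sides are linear in the mixed action of
  \<open>i\<close>, so at every stage and against every reply the expected absorbing payoff is at most
  \<open>M\<close> times the probability of absorbing at that stage. Summing over stages, the payoff of
  \<open>i\<close> is at most \<open>M\<close> times the total absorption probability, hence at most \<open>M\<close>. As payoffs
  are positive, \<open>v\<^sub>i \<ge> 0\<close>, and \<open>\<rho>\<^sub>i(x) \<ge> 0\<close> when it is finite.\<close>

text \<open>The numerator of \<^const>\<open>rmix\<close>, that is the paper's \<open>p(x) r\<^sub>i(x)\<close>; unlike \<open>r\<^sub>i(x)\<close> it is
  meaningful when \<open>p(x) = 0\<close>.\<close>

definition prmix :: "('i::finite \<Rightarrow> 'a set) \<Rightarrow> ('i \<Rightarrow> ('i \<Rightarrow> 'a) \<Rightarrow> real) \<Rightarrow> (('i \<Rightarrow> 'a) \<Rightarrow> real)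
     \<Rightarrow> 'i \<Rightarrow> ('i \<Rightarrow> 'a \<Rightarrow> real) \<Rightarrow> real" where
  "prmix A r p i x = (\<Sum>a\<in>profiles A. r i a * p a * prob_prof x a)"

definition histories :: "('i \<Rightarrow> 'a set) \<Rightarrow> nat \<Rightarrow> ('i \<Rightarrow> 'a) list set" where
  "histories A n = {h. set h \<subseteq> profiles A \<and> length h = n}"

definition survival :: "('i::finite \<Rightarrow> 'a set) \<Rightarrow> (('i \<Rightarrow> 'a) \<Rightarrow> real)
     \<Rightarrow> ('i \<Rightarrow> ('i \<Rightarrow> 'a) list \<Rightarrow> 'a \<Rightarrow> real) \<Rightarrow> nat \<Rightarrow> real" where
  "survival A p \<sigma> n = (\<Sum>h\<in>histories A n. reach p \<sigma> h)"

lemma game_finite_actions: "pos_rec_absorbing_game A r p \<Longrightarrow> finite (A j)"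
  by (simp add: pos_rec_absorbing_game_def)

lemma finite_profiles: "(\<And>j. finite (A j)) \<Longrightarrow> finite (profiles (A :: 'i::finite \<Rightarrow> 'a set))"
  by (simp add: profiles_def finite_PiE)

lemma game_bounds:
  assumes "pos_rec_absorbing_game A r p" and "a \<in> profiles A"
  shows "0 \<le> p a" and "p a \<le> 1" and "0 < r j a" and "r j a \<le> 1"
  using assms by (simp_all add: pos_rec_absorbing_game_def)

lemma mixed_profile_stage: "strat_profile A \<sigma> \<Longrightarrow> mixed_profile A (\<lambda>j. \<sigma> j h)"
  by (simp add: strat_profile_def strat_def mixed_profile_def)

lemma mixed_dirac: "finite S \<Longrightarrow> b \<in> S \<Longrightarrow> mixed S (dirac b)"
  by (simp add: mixed_def dirac_def)

lemma mixed_profile_fun_upd: "mixed_profile A x \<Longrightarrow> mixed (A i) y \<Longrightarrow> mixed_profile A (x(i := y))"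
  by (simp add: mixed_profile_def)

lemma prob_prof_nonneg: "mixed_profile A x \<Longrightarrow> 0 \<le> prob_prof x a"
  by (simp add: prob_prof_def mixed_profile_def mixed_def prod_nonneg)

lemma sum_prob_prof_eq_1:
  assumes "\<And>j. finite (A j)" and "mixed_profile A x"
  shows "(\<Sum>a\<in>profiles A. prob_prof x a) = 1"
proof -
  have "(\<Sum>a\<in>profiles A. prob_prof x a) = (\<Prod>j\<in>UNIV. \<Sum>b\<in>A j. x j b)"
    unfolding profiles_def prob_prof_def by (rule prod_sum_PiE[symmetric]) (use assms in auto)
  also have "\<dots> = 1"
    using assms(2) by (simp add: mixed_profile_def mixed_def)
  finally show ?thesis .
qed

lemma prob_prof_fun_upd:
  fixes x :: "'i::finite \<Rightarrow> 'a \<Rightarrow> real"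
  assumes "finite S" and "a i \<in> S"
  shows "prob_prof (x(i := y)) a = (\<Sum>b\<in>S. y b * prob_prof (x(i := dirac b)) a)"
proof -
  define R where "R = (\<Prod>j\<in>UNIV - {i}. x j (a j))"
  have split: "prob_prof (x(i := z)) a = z (a i) * R" for z
  proof -
    have "prob_prof (x(i := z)) a = z (a i) * (\<Prod>j\<in>UNIV - {i}. (x(i := z)) j (a j))"
      unfolding prob_prof_def by (subst prod.remove[of _ i]) auto
    also have "(\<Prod>j\<in>UNIV - {i}. (x(i := z)) j (a j)) = R"
      unfolding R_def by (rule prod.cong) auto
    finally show ?thesis .
  qed
  have "(\<Sum>b\<in>S. y b * prob_prof (x(i := dirac b)) a) = (\<Sum>b\<in>S. if b = a i then y b * R else 0)"
    by (intro sum.cong refl) (simp add: split dirac_def)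
  also have "\<dots> = y (a i) * R"
    using assms by simp
  finally show ?thesis
    by (simp add: split)
qed

lemma sum_prob_prof_fun_upd:
  fixes x :: "'i::finite \<Rightarrow> 'a \<Rightarrow> real"
  assumes "finite P" and "finite S" and "\<And>a. a \<in> P \<Longrightarrow> a i \<in> S"
  shows "(\<Sum>a\<in>P. f a * prob_prof (x(i := y)) a)
       = (\<Sum>b\<in>S. y b * (\<Sum>a\<in>P. f a * prob_prof (x(i := dirac b)) a))"
proof -
  have "(\<Sum>a\<in>P. f a * prob_prof (x(i := y)) a)
      = (\<Sum>a\<in>P. \<Sum>b\<in>S. y b * (f a * prob_prof (x(i := dirac b)) a))"
    using assms by (intro sum.cong refl) (simp add: prob_prof_fun_upd sum_distrib_left ac_simps)
  also have "\<dots> = (\<Sum>b\<in>S. y b * (\<Sum>a\<in>P. f a * prob_prof (x(i := dirac b)) a))"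
    by (subst sum.swap) (simp add: sum_distrib_left)
  finally show ?thesis .
qed

lemma pmix_nonneg:
  assumes game: "pos_rec_absorbing_game A r p" and "mixed_profile A x"
  shows "0 \<le> pmix A p x"
  unfolding pmix_def using assms
  by (auto intro!: sum_nonneg mult_nonneg_nonneg prob_prof_nonneg game_bounds(1)[OF game])

lemma prmix_nonneg:
  assumes game: "pos_rec_absorbing_game A r p" and "mixed_profile A x"
  shows "0 \<le> prmix A r p i x"
  unfolding prmix_def using assms
  by (auto intro!: sum_nonneg mult_nonneg_nonneg prob_prof_nonneg game_bounds(1)[OF game]
      less_imp_le[OF game_bounds(3)[OF game]])

lemma prmix_le_pmix:
  assumes game: "pos_rec_absorbing_game A r p" and "mixed_profile A x"
  shows "prmix A r p i x \<le> pmix A p x"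
  unfolding prmix_def pmix_def using assms
  by (auto intro!: sum_mono mult_right_mono mult_left_le_one_le prob_prof_nonneg
      game_bounds(1,4)[OF game] less_imp_le[OF game_bounds(3)[OF game]])

lemma rmix_eq: "rmix A r p i x = prmix A r p i x / pmix A p x"
  by (simp add: rmix_def prmix_def)

lemma prmix_fun_upd:
  "(\<And>j. finite (A j)) \<Longrightarrow>
    prmix A r p i (x(i := y)) = (\<Sum>b\<in>A i. y b * prmix A r p i (x(i := dirac b)))"
  unfolding prmix_def by (rule sum_prob_prof_fun_upd[OF finite_profiles]) (auto simp: profiles_def)

lemma pmix_fun_upd:
  "(\<And>j. finite (A j)) \<Longrightarrow> pmix A p (x(i := y)) = (\<Sum>b\<in>A i. y b * pmix A p (x(i := dirac b)))"
  unfolding pmix_def by (rule sum_prob_prof_fun_upd[OF finite_profiles]) (auto simp: profiles_def)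

lemma sum_prob_prof_nonabsorbing:
  assumes "\<And>j. finite (A j)" and "mixed_profile A x"
  shows "(\<Sum>a\<in>profiles A. prob_prof x a * (1 - p a)) = 1 - pmix A p x"
  using sum_prob_prof_eq_1[OF assms]
  by (simp add: pmix_def right_diff_distrib sum_subtractf mult.commute)

lemma histories_0: "histories A 0 = {[]}"
  by (auto simp: histories_def)

lemma histories_Suc:
  "histories A (Suc n) = (\<lambda>(h, a). h @ [a]) ` (histories A n \<times> profiles A)"
proof (intro equalityI subsetI)
  fix h assume h: "h \<in> histories A (Suc n)"
  then have "h \<noteq> []"
    by (auto simp: histories_def)
  then have "h = butlast h @ [last h]" and "(butlast h, last h) \<in> histories A n \<times> profiles A"
    using h last_in_set[of h] by (auto simp: histories_def dest: in_set_butlastD)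
  then show "h \<in> (\<lambda>(h, a). h @ [a]) ` (histories A n \<times> profiles A)"
    by (auto intro: rev_image_eqI)
qed (auto simp: histories_def)

lemma reach_snoc:
  "reach p \<sigma> (h @ [a]) = reach p \<sigma> h * (prob_prof (\<lambda>j. \<sigma> j h) a * (1 - p a))"
proof -
  have "reach p \<sigma> h = (\<Prod>k<length h. prob_prof (\<lambda>j. \<sigma> j (take k (h @ [a]))) ((h @ [a]) ! k)
                                     * (1 - p ((h @ [a]) ! k)))"
    unfolding reach_def by (rule prod.cong) (auto simp: nth_append)
  then show ?thesis
    by (simp add: reach_def)
qed

lemma reach_nonneg:
  assumes game: "pos_rec_absorbing_game A r p" and \<sigma>: "strat_profile A \<sigma>"
    and h: "set h \<subseteq> profiles A"
  shows "0 \<le> reach p \<sigma> h"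
proof -
  have "0 \<le> 1 - p (h ! k)" if "k < length h" for k
    using game_bounds(2)[OF game] h nth_mem[OF that] by auto
  then show ?thesis
    unfolding reach_def
    by (auto intro!: prod_nonneg mult_nonneg_nonneg prob_prof_nonneg[OF mixed_profile_stage[OF \<sigma>]])
qed

lemma survival_0: "survival A p \<sigma> 0 = 1"
  by (simp add: survival_def histories_0 reach_def)

lemma survival_nonneg:
  "pos_rec_absorbing_game A r p \<Longrightarrow> strat_profile A \<sigma> \<Longrightarrow> 0 \<le> survival A p \<sigma> n"
  unfolding survival_def by (intro sum_nonneg reach_nonneg) (auto simp: histories_def)

lemma survival_Suc:
  assumes "\<And>j. finite (A j)" and "strat_profile A \<sigma>"
  shows "survival A p \<sigma> (Suc n)
       = survival A p \<sigma> n - (\<Sum>h\<in>histories A n. reach p \<sigma> h * pmix A p (\<lambda>j. \<sigma> j h))"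
proof -
  have "survival A p \<sigma> (Suc n)
      = (\<Sum>(h, a)\<in>histories A n \<times> profiles A.
           reach p \<sigma> h * (prob_prof (\<lambda>j. \<sigma> j h) a * (1 - p a)))"
    unfolding survival_def histories_Suc
    by (subst sum.reindex) (auto simp: inj_on_def reach_snoc split_def)
  also have "\<dots> = (\<Sum>h\<in>histories A n. reach p \<sigma> h * (1 - pmix A p (\<lambda>j. \<sigma> j h)))"
    by (simp add: sum.cartesian_product[symmetric] sum_distrib_left[symmetric]
        sum_prob_prof_nonabsorbing assms mixed_profile_stage)
  finally show ?thesis
    by (simp add: survival_def right_diff_distrib sum_subtractf)
qed

lemma gamma_eq_suminf:
  "gamma A r p i \<sigma> = (\<Sum>n. \<Sum>h\<in>histories A n. reach p \<sigma> h * prmix A r p i (\<lambda>j. \<sigma> j h))"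
  by (simp add: gamma_def histories_def absorb_pay_def prmix_def ac_simps)

lemma gamma_bounded:
  assumes game: "pos_rec_absorbing_game A r p" and \<sigma>: "strat_profile A \<sigma>" and "0 \<le> M"
    and stage: "\<And>h. prmix A r p i (\<lambda>j. \<sigma> j h) \<le> M * pmix A p (\<lambda>j. \<sigma> j h)"
  shows "0 \<le> gamma A r p i \<sigma> \<and> gamma A r p i \<sigma> \<le> M"
proof -
  define g where "g n = (\<Sum>h\<in>histories A n. reach p \<sigma> h * prmix A r p i (\<lambda>j. \<sigma> j h))" for n
  have reach: "0 \<le> reach p \<sigma> h" if "h \<in> histories A n" for h n
    using reach_nonneg[OF game \<sigma>] that by (simp add: histories_def)
  have g_nonneg: "0 \<le> g n" for n
    unfolding g_def
    by (intro sum_nonneg mult_nonneg_nonneg reach prmix_nonneg[OF game mixed_profile_stage[OF \<sigma>]])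
  have g_le: "g n \<le> M * (survival A p \<sigma> n - survival A p \<sigma> (Suc n))" for n
  proof -
    have "g n \<le> (\<Sum>h\<in>histories A n. reach p \<sigma> h * (M * pmix A p (\<lambda>j. \<sigma> j h)))"
      unfolding g_def by (intro sum_mono mult_left_mono stage reach)
    also have "\<dots> = M * (survival A p \<sigma> n - survival A p \<sigma> (Suc n))"
      using game_finite_actions[OF game]
      by (simp add: survival_Suc[OF _ \<sigma>] sum_distrib_left ac_simps)
    finally show ?thesis .
  qed
  have partial_sums: "(\<Sum>n<N. g n) \<le> M" for N
  proof -
    have "(\<Sum>n<N. g n) \<le> (\<Sum>n<N. M * (survival A p \<sigma> n - survival A p \<sigma> (Suc n)))"
      by (intro sum_mono g_le)
    also have "\<dots> = M * (survival A p \<sigma> 0 - survival A p \<sigma> N)"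
      by (simp add: sum_distrib_left[symmetric] sum_lessThan_telescope')
    also have "\<dots> \<le> M"
      using survival_nonneg[OF game \<sigma>] \<open>0 \<le> M\<close> by (intro mult_left_le) (auto simp: survival_0)
    finally show ?thesis .
  qed
  have "summable g"
    by (rule summableI_nonneg_bounded[OF g_nonneg partial_sums])
  then have "0 \<le> suminf g" and "suminf g \<le> M"
    by (simp_all add: suminf_nonneg g_nonneg suminf_le_const partial_sums)
  moreover have "gamma A r p i \<sigma> = suminf g"
    unfolding gamma_eq_suminf by (simp add: g_def[abs_def])
  ultimately show ?thesis
    by simp
qed

lemma strat_profile_exists:
  assumes game: "pos_rec_absorbing_game A r p"
  shows "\<exists>\<sigma>. strat_profile A \<sigma>"
proof
  have "A j \<noteq> {}" for j
    using game by (simp add: pos_rec_absorbing_game_def)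
  then show "strat_profile A (\<lambda>j h. dirac (SOME b. b \<in> A j))"
    by (simp add: strat_profile_def strat_def mixed_dirac game_finite_actions[OF game] some_in_eq)
qed

lemma strat_profile_fun_upd: "strat_profile A \<sigma> \<Longrightarrow> strat A i \<tau> \<Longrightarrow> strat_profile A (\<sigma>(i := \<tau>))"
  by (simp add: strat_profile_def)

lemma gamma_nonneg_le_1:
  assumes game: "pos_rec_absorbing_game A r p" and \<sigma>: "strat_profile A \<sigma>"
  shows "0 \<le> gamma A r p i \<sigma> \<and> gamma A r p i \<sigma> \<le> 1"
  by (rule gamma_bounded[OF game \<sigma>])
    (simp_all add: prmix_le_pmix[OF game mixed_profile_stage[OF \<sigma>]])

lemma best_reply_value_nonneg:
  assumes game: "pos_rec_absorbing_game A r p" and \<sigma>: "strat_profile A \<sigma>"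
  shows "0 \<le> (SUP \<tau>\<in>{\<tau>. strat A i \<tau>}. gamma A r p i (\<sigma>(i := \<tau>)))"
proof -
  have "bdd_above ((\<lambda>\<tau>. gamma A r p i (\<sigma>(i := \<tau>))) ` {\<tau>. strat A i \<tau>})"
    using gamma_nonneg_le_1[OF game strat_profile_fun_upd[OF \<sigma>]]
    by (intro bdd_aboveI[where M = 1]) auto
  moreover have "\<sigma> i \<in> {\<tau>. strat A i \<tau>}"
    using \<sigma> by (simp add: strat_profile_def)
  ultimately have "gamma A r p i (\<sigma>(i := \<sigma> i))
      \<le> (SUP \<tau>\<in>{\<tau>. strat A i \<tau>}. gamma A r p i (\<sigma>(i := \<tau>)))"
    by (rule cSUP_upper2) simp
  then show ?thesis
    using gamma_nonneg_le_1[OF game \<sigma>, of i] by simp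
qed

lemma minmax_nonneg: "pos_rec_absorbing_game A r p \<Longrightarrow> 0 \<le> minmax A r p i"
  unfolding minmax_def using strat_profile_exists
  by (auto intro!: cINF_greatest best_reply_value_nonneg)

lemma minmax_le_best_reply_value:
  assumes "pos_rec_absorbing_game A r p" and "strat_profile A \<sigma>"
  shows "minmax A r p i \<le> (SUP \<tau>\<in>{\<tau>. strat A i \<tau>}. gamma A r p i (\<sigma>(i := \<tau>)))"
  unfolding minmax_def using assms
  by (intro cINF_lower bdd_belowI[where m = 0]) (auto intro: best_reply_value_nonneg)

lemma rmix_le_rho:
  assumes "finite (A i)" and "b \<in> A i" and "0 < pmix A p (x(i := dirac b))"
  shows "ereal (rmix A r p i (x(i := dirac b))) \<le> rho A r p i x"
  using assms by (auto simp: rho_def Let_def intro!: Max_ge)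

lemma rho_MInf_or_nonneg:
  assumes game: "pos_rec_absorbing_game A r p" and x: "mixed_profile A x"
  shows "rho A r p i x = -\<infinity> \<or> (\<exists>m\<ge>0. rho A r p i x = ereal m)"
proof (cases "rho A r p i x = -\<infinity>")
  case False
  then obtain b where b: "b \<in> A i" "0 < pmix A p (x(i := dirac b))"
    by (auto simp: rho_def Let_def split: if_splits)
  have "mixed_profile A (x(i := dirac b))"
    by (intro mixed_profile_fun_upd[OF x] mixed_dirac game_finite_actions[OF game] b)
  then have "0 \<le> rmix A r p i (x(i := dirac b))"
    unfolding rmix_eq using prmix_nonneg[OF game] pmix_nonneg[OF game] by simp
  moreover have "ereal (rmix A r p i (x(i := dirac b))) \<le> rho A r p i x"
    using rmix_le_rho[OF game_finite_actions[OF game] b] .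
  moreover have "rho A r p i x \<noteq> \<infinity>"
    by (simp add: rho_def Let_def)
  ultimately show ?thesis
    by (cases "rho A r p i x") auto
qed simp

lemma prmix_le_of_rmix_le:
  assumes game: "pos_rec_absorbing_game A r p" and y: "mixed_profile A y"
    and rmix: "0 < pmix A p y \<Longrightarrow> rmix A r p i y \<le> M" and "0 \<le> M"
  shows "prmix A r p i y \<le> M * pmix A p y"
proof (cases "pmix A p y = 0")
  case True
  then show ?thesis
    using prmix_le_pmix[OF game y] by simp
next
  case False
  then have "0 < pmix A p y"
    using pmix_nonneg[OF game y] by simp
  then show ?thesis
    using rmix by (simp add: rmix_eq divide_le_eq mult.commute)
qed

lemma prmix_pure_reply_le:
  assumes game: "pos_rec_absorbing_game A r p" and x: "mixed_profile A x"
    and rho: "rho A r p i x \<le> ereal M" and "0 \<le> M" and b: "b \<in> A i"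
  shows "prmix A r p i (x(i := dirac b)) \<le> M * pmix A p (x(i := dirac b))"
proof (rule prmix_le_of_rmix_le[OF game _ _ \<open>0 \<le> M\<close>])
  show "mixed_profile A (x(i := dirac b))"
    by (intro mixed_profile_fun_upd[OF x] mixed_dirac game_finite_actions[OF game] b)
  show "rmix A r p i (x(i := dirac b)) \<le> M" if "0 < pmix A p (x(i := dirac b))"
    using order_trans[OF rmix_le_rho[OF game_finite_actions[OF game] b that, of r] rho] by simp
qed

lemma prmix_reply_le:
  assumes game: "pos_rec_absorbing_game A r p" and x: "mixed_profile A x"
    and rho: "rho A r p i x \<le> ereal M" and "0 \<le> M" and y: "mixed (A i) y"
  shows "prmix A r p i (x(i := y)) \<le> M * pmix A p (x(i := y))"
proof -
  note fin = game_finite_actions[OF game]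
  have "prmix A r p i (x(i := y)) = (\<Sum>b\<in>A i. y b * prmix A r p i (x(i := dirac b)))"
    by (rule prmix_fun_upd[OF fin])
  also have "\<dots> \<le> (\<Sum>b\<in>A i. y b * (M * pmix A p (x(i := dirac b))))"
    using y by (intro sum_mono mult_left_mono prmix_pure_reply_le[OF game x rho \<open>0 \<le> M\<close>])
      (auto simp: mixed_def)
  also have "\<dots> = M * pmix A p (x(i := y))"
    unfolding pmix_fun_upd[OF fin, where x = x and i = i and y = y]
    by (simp add: sum_distrib_left ac_simps)
  finally show ?thesis .
qed

lemma minmax_le_of_rho_le:
  fixes A :: "'i::finite \<Rightarrow> 'a set" and x :: "'i \<Rightarrow> 'a \<Rightarrow> real"
  assumes game: "pos_rec_absorbing_game A r p" and x: "mixed_profile A x"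
    and rho: "rho A r p i x \<le> ereal M" and "0 \<le> M"
  shows "minmax A r p i \<le> M"
proof -
  define \<sigma> where "\<sigma> = (\<lambda>(j::'i) (h::('i \<Rightarrow> 'a) list). x j)"
  have \<sigma>: "strat_profile A \<sigma>"
    using x by (simp add: \<sigma>_def strat_profile_def strat_def mixed_profile_def)
  have "gamma A r p i (\<sigma>(i := \<tau>)) \<le> M" if \<tau>: "strat A i \<tau>" for \<tau>
  proof -
    have "(\<lambda>j. (\<sigma>(i := \<tau>)) j h) = x(i := \<tau> h)" for h
      by (auto simp: \<sigma>_def)
    moreover have "prmix A r p i (x(i := \<tau> h)) \<le> M * pmix A p (x(i := \<tau> h))" for h
      using \<tau> by (intro prmix_reply_le[OF game x rho \<open>0 \<le> M\<close>]) (simp add: strat_def)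
    ultimately show ?thesis
      using gamma_bounded[OF game strat_profile_fun_upd[OF \<sigma> \<tau>] \<open>0 \<le> M\<close>] by simp
  qed
  moreover have "{\<tau>. strat A i \<tau>} \<noteq> {}"
    using \<sigma> by (auto simp: strat_profile_def)
  ultimately have "(SUP \<tau>\<in>{\<tau>. strat A i \<tau>}. gamma A r p i (\<sigma>(i := \<tau>))) \<le> M"
    by (intro cSUP_least) auto
  then show ?thesis
    using minmax_le_best_reply_value[OF game \<sigma>, of i] by linarith
qed

theorem mainTheorem4:
  fixes A :: "'i::finite \<Rightarrow> 'a set"
    and r :: "'i \<Rightarrow> ('i \<Rightarrow> 'a) \<Rightarrow> real"
    and p :: "('i \<Rightarrow> 'a) \<Rightarrow> real"
    and x :: "'i \<Rightarrow> 'a \<Rightarrow> real"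
    and i :: 'i
  assumes "pos_rec_absorbing_game A r p"
    and "x \<in> nonabs A p"
  shows "ereal (minmax A r p i) \<le> max 0 (rho A r p i x)
         \<and> (rho A r p i x = -\<infinity> \<longrightarrow> minmax A r p i = 0)
         \<and> (rho A r p i x > -\<infinity> \<longrightarrow> rho A r p i x \<ge> ereal (minmax A r p i))"
proof -
  have x: "mixed_profile A x"
    using assms(2) by (simp add: nonabs_def)
  consider "rho A r p i x = -\<infinity>" | m where "0 \<le> m" "rho A r p i x = ereal m"
    using rho_MInf_or_nonneg[OF assms(1) x] by blast
  then show ?thesis
  proof cases
    case 1
    then have "minmax A r p i \<le> 0"
      using minmax_le_of_rho_le[OF assms(1) x, of i 0] by simp
    with minmax_nonneg[OF assms(1), of i] 1 show ?thesis
      by simp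
  next
    case 2
    then have "minmax A r p i \<le> m"
      using minmax_le_of_rho_le[OF assms(1) x, of i m] by simp
    with 2 show ?thesis
      by (simp add: max_absorb2)
  qed
qed

end
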